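(* Let $\widetilde{E(2)}$ be as in the context, let $K\in(-1,1)$, $K\neq0$, let $b$ solve $b'(v)=\sqrt{\lambda_1^2-K(\lambda_1^2\cos^2 b(v)+\lambda_2^2\sin^2 b(v))}$, $b(0)=0$, let $W>0$ be the unique positive number with $b(W)=\pi$, let $x_3$ solve $x_3'(v)=\frac{\lambda_1\lambda_2K}{\lambda_1+b'(v)}$, $x_3(0)=0$, and let $X:\mathbb{C}\to\widetilde{E(2)}$ be $$X(u+iv)=\Big(\tfrac{1}{\lambda_1^2\lambda_2}\big(\tfrac{1}{\lambda_1}\cos x_3(v)\sin b(v)+\tfrac{1}{\lambda_2}\sin x_3(v)\cos b(v)\big)x_3'(v)\sinh(-\lambda_1u),\ \tfrac{1}{\lambda_1^2\lambda_2}\big(\tfrac{1}{\lambda_1}\sin x_3(v)\sin b(v)-\tfrac{1}{\lambda_2}\cos x_3(v)\cos b(v)\big)x_3'(v)\sinh(-\lambda_1u),\ x_3(v)\Big).$$ Then: (1) the $x_3$-axis $\{(0,0,t):t\in\mathbb{R}\}$ is contained in $X(\mathbb{C})$; (2) for every constant $C\in\mathbb{R}$, the intersection of $X(\mathbb{C})$ with the plane $\{x_3=C\}$ is a straight line (in the coordinates $(x_1,x_2,x_3)$); (3) $X(\mathbb{C})$ is invariant under left multiplication by $(0,0,2x_3(W))$; more precisely $(0,0,2x_3(W))*X(u+iv)=X(u+i(v+2W))$ for all $u,v\in\mathbb{R}$.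
   Context: $\widetilde{E(2)}$ is $\mathbb{R}^3$ with coordinates $(x_1,x_2,x_3)$ and group law $(a_1,b_1,c_1)*(a_2,b_2,c_2)=(a_1+a_2\cos c_1-b_2\sin c_1,\ b_1+a_2\sin c_1+b_2\cos c_1,\ c_1+c_2)$, with the left-invariant metric $\lambda_1^2(\cos x_3\,dx_1+\sin x_3\,dx_2)^2+\lambda_2^2(-\sin x_3\,dx_1+\cos x_3\,dx_2)^2+\frac{1}{\lambda_1^2\lambda_2^2}dx_3^2$, where either $\lambda_1>\lambda_2>0$ or $\lambda_1=\lambda_2=1$. (The solution $b$ is defined on all of $\mathbb{R}$ and is an increasing bijection of $\mathbb{R}$, so $W$ exists and is unique.) *)

theory Defs
  imports "HOL-Analysis.Analysis"
begin

text \<open>Points of the universal cover of E(2): triples (x1,x2,x3) in real x real x real.\<close>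

definition e2mult :: "real \<times> real \<times> real \<Rightarrow> real \<times> real \<times> real \<Rightarrow> real \<times> real \<times> real" where
  "e2mult p q = (case p of (a1, b1, c1) \<Rightarrow> case q of (a2, b2, c2) \<Rightarrow>
     (a1 + a2 * cos c1 - b2 * sin c1, b1 + a2 * sin c1 + b2 * cos c1, c1 + c2))"

definition bODE :: "real \<Rightarrow> real \<Rightarrow> real \<Rightarrow> real \<Rightarrow> real" where
  "bODE l1 l2 K y = sqrt (l1^2 - K * (l1^2 * (cos y)^2 + l2^2 * (sin y)^2))"

definition x3ODE :: "real \<Rightarrow> real \<Rightarrow> real \<Rightarrow> (real \<Rightarrow> real) \<Rightarrow> real \<Rightarrow> real" where
  "x3ODE l1 l2 K b v = l1 * l2 * K / (l1 + bODE l1 l2 K (b v))"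

definition Xmap :: "real \<Rightarrow> real \<Rightarrow> real \<Rightarrow> (real \<Rightarrow> real) \<Rightarrow> (real \<Rightarrow> real) \<Rightarrow> complex \<Rightarrow> real \<times> real \<times> real" where
  "Xmap l1 l2 K b x3 z = (let u = Re z; v = Im z; x3' = x3ODE l1 l2 K b v in
     ( 1 / (l1^2 * l2) * (1 / l1 * cos (x3 v) * sin (b v) + 1 / l2 * sin (x3 v) * cos (b v)) * x3' * sinh (- l1 * u),
       1 / (l1^2 * l2) * (1 / l1 * sin (x3 v) * sin (b v) - 1 / l2 * cos (x3 v) * cos (b v)) * x3' * sinh (- l1 * u),
       x3 v))"

end

theory Submission
  imports Defs
begin

(* Since bODE is positive and pi-periodic, uniqueness for the autonomous equation b' = bODE(b)
   forces b(v + W) = b(v) + pi.  Hence x3' is W-periodic, so x3(v + W) = x3(v) + x3(W); as x3'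
   never vanishes, x3 is injective, and being quasi-periodic with nonzero increment it maps onto
   the reals.  For fixed v, u |-> X(u + iv) runs through the whole line through (0, 0, x3 v) in a
   horizontal direction rotated by the angle x3 v, which gives (1) and (2).  Left multiplication
   by (0, 0, c) rotates horizontal vectors by c, and b(v + 2W) = b(v) + 2 pi, which gives (3). *)

lemma strict_mono_if_DERIV_pos:
  fixes f f' :: "real \<Rightarrow> real"
  assumes "\<And>t. (f has_real_derivative f' t) (at t)" and "\<And>t. f' t > 0"
  shows "strict_mono f"
  using assms by (force intro: strict_monoI DERIV_pos_imp_increasing)

lemma inj_if_DERIV_nonzero:
  fixes f f' :: "real \<Rightarrow> real"
  assumes "\<And>t. (f has_real_derivative f' t) (at t)" and "\<And>t. f' t \<noteq> 0"
  shows "inj f"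
proof (rule linorder_injI)
  fix s t :: real assume "s < t"
  then obtain z where "f t - f s = (t - s) * f' z"
    using MVT2[of s t f f'] assms(1) by blast
  then show "f s \<noteq> f t" using \<open>s < t\<close> assms(2)[of z] by auto
qed

text \<open>No Lipschitz condition is needed: if \<open>H\<close> is a primitive of \<open>1 / F\<close>, then
  \<open>H \<circ> f - H \<circ> g\<close> has derivative zero, and \<open>H\<close> is strictly increasing.\<close>
lemma autonomous_ode_unique:
  fixes F f g :: "real \<Rightarrow> real"
  assumes F_cont: "continuous_on UNIV F" and F_pos: "\<And>y. F y > 0"
    and f: "\<And>t. (f has_real_derivative F (f t)) (at t)"
    and g: "\<And>t. (g has_real_derivative F (g t)) (at t)"
    and "f t0 = g t0"
  shows "f t = g t"
proof -
  define lo hi where "lo = min t0 t" and "hi = max t0 t"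
  have "strict_mono f" "strict_mono g"
    using strict_mono_if_DERIV_pos[OF f F_pos] strict_mono_if_DERIV_pos[OF g F_pos] .
  then have mono: "mono f" "mono g" by (simp_all add: strict_mono_mono)
  define R where "R = \<bar>f lo\<bar> + \<bar>f hi\<bar> + \<bar>g lo\<bar> + \<bar>g hi\<bar> + 1"
  have in_R: "f s \<in> {-R<..<R}" "g s \<in> {-R<..<R}" if "s \<in> {lo..hi}" for s
    using that monoD[OF mono(1), of lo s] monoD[OF mono(1), of s hi]
      monoD[OF mono(2), of lo s] monoD[OF mono(2), of s hi]
    by (auto simp: R_def)
  define H where "H y = integral {-R..y} (\<lambda>y. 1 / F y)" for y
  have H': "(H has_real_derivative 1 / F y) (at y)" if "y \<in> {-R<..<R}" for y
  proof -
    have "continuous_on {-R..R} (\<lambda>y. 1 / F y)"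
      using F_pos by (intro continuous_intros continuous_on_subset[OF F_cont])
        (auto simp: less_imp_neq[OF F_pos, symmetric])
    from integral_has_real_derivative[OF this, of y]
    have "(H has_real_derivative 1 / F y) (at y within {-R..R})"
      unfolding H_def using that by simp
    with that show ?thesis by (simp add: at_within_Icc_at)
  qed
  have "\<exists>c. \<forall>s\<in>{lo..hi}. H (f s) - H (g s) = c"
  proof (rule has_field_derivative_zero_constant)
    fix s assume s: "s \<in> {lo..hi}"
    have "((\<lambda>s. H (f s) - H (g s)) has_real_derivative
        1 / F (f s) * F (f s) - 1 / F (g s) * F (g s)) (at s)"
      by (intro derivative_intros DERIV_chain2[OF H'] f g in_R s)
    then show "((\<lambda>s. H (f s) - H (g s)) has_real_derivative 0) (at s within {lo..hi})"
      using F_pos[of "f s"] F_pos[of "g s"] by (simp add: has_field_derivative_at_within)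
  qed simp
  then have "H (f t) - H (g t) = H (f t0) - H (g t0)"
    by (fastforce simp: lo_def hi_def)
  then have H_eq: "H (f t) = H (g t)" using \<open>f t0 = g t0\<close> by simp
  have H_less: "H x < H y" if "x < y" "x \<in> {-R<..<R}" "y \<in> {-R<..<R}" for x y
    using that F_pos by (intro DERIV_pos_imp_increasing[OF \<open>x < y\<close>]) (force intro: H')
  have "t \<in> {lo..hi}" by (simp add: lo_def hi_def)
  then show ?thesis
    using H_eq H_less[of "f t" "g t"] H_less[of "g t" "f t"] in_R
    by (metis less_irrefl linorder_neqE)
qed

lemma autonomous_ode_shift:
  fixes F f :: "real \<Rightarrow> real"
  assumes "continuous_on UNIV F" and "\<And>y. F y > 0" and F_periodic: "\<And>y. F (y + p) = F y"
    and f: "\<And>t. (f has_real_derivative F (f t)) (at t)"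
    and "f (t0 + W) = f t0 + p"
  shows "f (t + W) = f t + p"
proof -
  have "((\<lambda>t. f (t + W) - p) has_real_derivative F (f (t + W) - p)) (at t)" for t
    using f[of "t + W"] F_periodic[of "f (t + W) - p"]
    by (auto simp: DERIV_shift intro!: derivative_eq_intros)
  from autonomous_ode_unique[OF assms(1,2) this f, of t0 t] show ?thesis
    using assms(5) by simp
qed

lemma periodic_derivative_shift:
  fixes f f' :: "real \<Rightarrow> real"
  assumes f: "\<And>t. (f has_real_derivative f' t) (at t)" and "\<And>t. f' (t + W) = f' t"
  shows "f (t + W) = f t + (f W - f 0)"
proof -
  have "((\<lambda>t. f (t + W) - f t) has_real_derivative 0) (at t)" for t
    using f[of "t + W"] f[of t] assms(2)[of t]
    by (auto simp: DERIV_shift intro!: derivative_eq_intros)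
  then show ?thesis using DERIV_isconst_all[of "\<lambda>t. f (t + W) - f t" t 0] by auto
qed

lemma surj_if_continuous_quasiperiodic:
  fixes f :: "real \<Rightarrow> real"
  assumes "continuous_on UNIV f" and shift: "\<And>t. f (t + W) = f t + c" and "c \<noteq> 0"
  shows "surj f"
proof -
  have plus: "f (t + real n * W) = f t + real n * c" for n t
  proof (induction n)
    case (Suc n)
    have "f (t + real (Suc n) * W) = f ((t + real n * W) + W)"
      by (simp add: algebra_simps)
    also have "\<dots> = f (t + real n * W) + c" by (rule shift)
    finally show ?case using Suc.IH by (simp add: algebra_simps)
  qed simp
  have minus: "f (t - real n * W) = f t - real n * c" for n t
    using plus[of "t - real n * W" n] by simp
  have conn: "connected (range f)"
    using connected_continuous_image[OF assms(1) connected_UNIV] .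
  have "y \<in> range f" for y
  proof -
    obtain n :: nat where "\<bar>y - f 0\<bar> / \<bar>c\<bar> \<le> real n"
      using real_arch_simple by blast
    then have y: "f 0 - real n * \<bar>c\<bar> \<le> y" "y \<le> f 0 + real n * \<bar>c\<bar>"
      using \<open>c \<noteq> 0\<close> by (auto simp: field_simps abs_le_iff)
    have "{f 0 + real n * c, f 0 - real n * c} \<subseteq> range f"
      using plus[of 0 n] minus[of 0 n] rangeI[of f "real n * W"] rangeI[of f "- (real n * W)"]
      by simp
    moreover have
      "{f 0 + real n * \<bar>c\<bar>, f 0 - real n * \<bar>c\<bar>} = {f 0 + real n * c, f 0 - real n * c}"
      by (cases "c \<ge> 0") auto
    ultimately have "f 0 - real n * \<bar>c\<bar> \<in> range f" "f 0 + real n * \<bar>c\<bar> \<in> range f"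
      by (metis insert_subset)+
    then show ?thesis using connectedD_interval[OF conn _ _ y] by blast
  qed
  then show ?thesis by blast
qed

lemma bODE_pos:
  assumes "0 < l2" "l2 \<le> l1" "-1 < K" "K < 1"
  shows "bODE l1 l2 K y > 0"
proof -
  define A where "A = l1^2 * (cos y)^2 + l2^2 * (sin y)^2"
  have "A \<le> l1^2 * (cos y)^2 + l1^2 * (sin y)^2"
    unfolding A_def using assms by (intro add_left_mono mult_right_mono power_mono) auto
  then have A: "0 \<le> A" "A \<le> l1^2" by (simp_all add: A_def flip: distrib_left)
  have "K * A \<le> \<bar>K\<bar> * l1^2"
    using A by (metis abs_ge_self abs_ge_zero mult_mono order.trans)
  also have "\<dots> < l1^2" using assms by simp
  finally show ?thesis by (simp add: bODE_def A_def)
qed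

lemma bODE_add_pi: "bODE l1 l2 K (y + pi) = bODE l1 l2 K y"
  by (simp add: bODE_def)

lemma continuous_on_bODE: "continuous_on UNIV (bODE l1 l2 K)"
  unfolding bODE_def by (intro continuous_intros)

lemma x3ODE_nonzero:
  assumes "0 < l2" "l2 \<le> l1" "-1 < K" "K < 1" "K \<noteq> 0"
  shows "x3ODE l1 l2 K b v \<noteq> 0"
  using bODE_pos[OF assms(1-4), of "b v"] assms by (simp add: x3ODE_def add_pos_pos)

definition ruling_direction ::
    "real \<Rightarrow> real \<Rightarrow> real \<Rightarrow> real \<Rightarrow> real \<times> real \<times> real" where
  "ruling_direction l1 l2 \<theta> \<beta> =
     (cos \<theta> * sin \<beta> / l1 + sin \<theta> * cos \<beta> / l2,
      sin \<theta> * sin \<beta> / l1 - cos \<theta> * cos \<beta> / l2, 0)"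

lemma ruling_direction_add_2pi:
  "ruling_direction l1 l2 \<theta> (\<beta> + 2 * pi) = ruling_direction l1 l2 \<theta> \<beta>"
  by (simp add: ruling_direction_def)

lemma Xmap_Complex:
  "Xmap l1 l2 K b x3 (Complex u v) = (0, 0, x3 v) +
     (sinh (- l1 * u) * x3ODE l1 l2 K b v / (l1^2 * l2))
       *\<^sub>R ruling_direction l1 l2 (x3 v) (b v)"
  by (simp add: Xmap_def Let_def ruling_direction_def mult_ac)

lemma ruling_direction_nonzero:
  assumes "l1 \<noteq> 0" "l2 \<noteq> 0"
  shows "ruling_direction l1 l2 \<theta> \<beta> \<noteq> 0"
proof
  define p q where "p = sin \<beta> / l1" and "q = cos \<beta> / l2"
  assume "ruling_direction l1 l2 \<theta> \<beta> = 0"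
  then have "(cos \<theta> * p + sin \<theta> * q)^2 + (sin \<theta> * p - cos \<theta> * q)^2 = 0"
    by (simp add: ruling_direction_def zero_prod_def p_def q_def)
  also have "(cos \<theta> * p + sin \<theta> * q)^2 + (sin \<theta> * p - cos \<theta> * q)^2 = p^2 + q^2"
    using sin_cos_squared_add[of \<theta>] by algebra
  finally have "sin \<beta> = 0" "cos \<beta> = 0"
    using assms by (simp_all add: sum_power2_eq_zero_iff p_def q_def)
  then show False using sin_cos_squared_add[of \<beta>] by simp
qed

lemma e2mult_axis_ruling:
  "e2mult (0, 0, c) ((0, 0, z) + s *\<^sub>R ruling_direction l1 l2 \<theta> \<beta>)
     = (0, 0, c + z) + s *\<^sub>R ruling_direction l1 l2 (\<theta> + c) \<beta>"
  by (simp add: e2mult_def ruling_direction_def sin_add cos_add algebra_simps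
      add_divide_distrib diff_divide_distrib)

locale e2_screw_surface =
  fixes l1 l2 K W :: real and b x3 :: "real \<Rightarrow> real"
  assumes l2_pos: "0 < l2" and l2_le_l1: "l2 \<le> l1"
    and K_bounds: "-1 < K" "K < 1" "K \<noteq> 0"
    and b_ode: "\<And>v. (b has_real_derivative bODE l1 l2 K (b v)) (at v)"
    and b0: "b 0 = 0" and bW: "b W = pi"
    and x3_ode: "\<And>v. (x3 has_real_derivative x3ODE l1 l2 K b v) (at v)"
    and x30: "x3 0 = 0"
begin

abbreviation X :: "complex \<Rightarrow> real \<times> real \<times> real" where
  "X \<equiv> Xmap l1 l2 K b x3"

lemma b_shift: "b (v + W) = b v + pi"
  using autonomous_ode_shift[OF continuous_on_bODE bODE_pos[OF l2_pos l2_le_l1 K_bounds(1,2)]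
      bODE_add_pi b_ode, of 0] b0 bW by simp

lemma x3ODE_shift: "x3ODE l1 l2 K b (v + W) = x3ODE l1 l2 K b v"
  by (simp add: x3ODE_def b_shift bODE_add_pi)

lemma x3_shift: "x3 (v + W) = x3 v + x3 W"
  using periodic_derivative_shift[OF x3_ode x3ODE_shift] x30 by simp

lemma inj_x3: "inj x3"
  using inj_if_DERIV_nonzero[OF x3_ode x3ODE_nonzero[OF l2_pos l2_le_l1 K_bounds]] .

lemma surj_x3: "surj x3"
proof (rule surj_if_continuous_quasiperiodic[where c = "x3 W"])
  show "x3 (v + W) = x3 v + x3 W" for v by (rule x3_shift)
  show "continuous_on UNIV x3"
    using x3_ode by (blast intro: continuous_at_imp_continuous_on DERIV_isCont)
  have "W \<noteq> 0" using b0 bW by auto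
  then show "x3 W \<noteq> 0" using inj_x3 x30 by (metis injD)
qed

lemma axis_in_range: "(0, 0, t) \<in> range X"
proof -
  obtain v where "x3 v = t" using surj_x3 by (metis surjD)
  then have "X (Complex 0 v) = (0, 0, t)" by (simp add: Xmap_Complex)
  then show ?thesis by (metis rangeI)
qed

lemma horizontal_slice_is_line:
  "\<exists>p d. d \<noteq> 0 \<and> {q \<in> range X. snd (snd q) = C} = {p + s *\<^sub>R d | s. True}"
proof -
  obtain v where v: "x3 v = C" using surj_x3 by (metis surjD)
  define d where "d = (x3ODE l1 l2 K b v / (l1^2 * l2)) *\<^sub>R ruling_direction l1 l2 C (b v)"
  have "d \<noteq> 0"
    using l2_pos l2_le_l1 x3ODE_nonzero[OF l2_pos l2_le_l1 K_bounds] ruling_direction_nonzero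
    by (simp add: d_def)
  have X_v: "X (Complex u v) = (0, 0, C) + sinh (- l1 * u) *\<^sub>R d" for u
    by (simp add: Xmap_Complex v d_def)
  have sinh_surj: "range (\<lambda>u. sinh (- l1 * u)) = UNIV"
  proof -
    have "l1 \<noteq> 0" using l2_pos l2_le_l1 by linarith
    then have "sinh (- l1 * (- arsinh s / l1)) = s" for s by simp
    then show ?thesis by (rule surjI)
  qed
  have "{q \<in> range X. snd (snd q) = C} = X ` {z. x3 (Im z) = C}"
    by (auto simp: Xmap_def Let_def)
  also have "{z. x3 (Im z) = C} = range (\<lambda>u. Complex u v)"
    by (auto simp: v[symmetric] inj_eq[OF inj_x3] image_iff complex_eq_iff)
  also have "X ` range (\<lambda>u. Complex u v)
      = (\<lambda>s. (0, 0, C) + s *\<^sub>R d) ` range (\<lambda>u. sinh (- l1 * u))"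
    unfolding image_image X_v ..
  also have "\<dots> = range (\<lambda>s. (0, 0, C) + s *\<^sub>R d)"
    unfolding sinh_surj ..
  also have "\<dots> = {(0, 0, C) + s *\<^sub>R d | s. True}" by blast
  finally show ?thesis using \<open>d \<noteq> 0\<close> by blast
qed

lemma screw_invariance: "e2mult (0, 0, 2 * x3 W) (X (Complex u v)) = X (Complex u (v + 2 * W))"
proof -
  have two_W: "v + 2 * W = (v + W) + W" by simp
  have shifted: "b (v + 2 * W) = b v + 2 * pi" "x3 (v + 2 * W) = x3 v + 2 * x3 W"
    "x3ODE l1 l2 K b (v + 2 * W) = x3ODE l1 l2 K b v"
    unfolding two_W b_shift x3_shift x3ODE_shift by simp_all
  define s where "s = sinh (- l1 * u) * x3ODE l1 l2 K b v / (l1^2 * l2)"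
  have "e2mult (0, 0, 2 * x3 W) (X (Complex u v))
      = (0, 0, 2 * x3 W + x3 v) + s *\<^sub>R ruling_direction l1 l2 (x3 v + 2 * x3 W) (b v)"
    unfolding Xmap_Complex s_def e2mult_axis_ruling ..
  also have "\<dots> = X (Complex u (v + 2 * W))"
    unfolding Xmap_Complex s_def shifted ruling_direction_add_2pi by (simp add: add.commute)
  finally show ?thesis .
qed

end

theorem theorem4p2:
  fixes l1 l2 K W :: real and b x3 :: "real \<Rightarrow> real"
  assumes lam: "(l1 > l2 \<and> l2 > 0) \<or> (l1 = 1 \<and> l2 = 1)"
    and K: "-1 < K" "K < 1" "K \<noteq> 0"
    and b_ode: "\<And>v. (b has_real_derivative bODE l1 l2 K (b v)) (at v)"
    and b0: "b 0 = 0"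
    and W: "W > 0" "b W = pi"
    and x3_ode: "\<And>v. (x3 has_real_derivative x3ODE l1 l2 K b v) (at v)"
    and x30: "x3 0 = 0"
  shows "(\<forall>t. (0, 0, t) \<in> range (Xmap l1 l2 K b x3))
     \<and> (\<forall>C. \<exists>p d :: real \<times> real \<times> real. d \<noteq> 0 \<and>
           {q \<in> range (Xmap l1 l2 K b x3). snd (snd q) = C} = {p + s *\<^sub>R d | s. True})
     \<and> (\<forall>u v. e2mult (0, 0, 2 * x3 W) (Xmap l1 l2 K b x3 (Complex u v))
              = Xmap l1 l2 K b x3 (Complex u (v + 2 * W)))"
proof -
  have "0 < l2" "l2 \<le> l1" using lam by auto
  then interpret e2_screw_surface l1 l2 K W b x3
    using K b_ode b0 W(2) x3_ode x30 by unfold_locales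
  show ?thesis using axis_in_range horizontal_slice_is_line screw_invariance by blast
qed

end
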